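(* Let $n\ge2$, let $\mathcal T_n$ be the set of rooted trees with vertices labeled $1,\dots,n$, and let $\sigma_1,\dots,\sigma_{n-1}:\mathcal T_n\to\mathcal T_n$ be the maps defined in the context. Let $\delta_n=\sigma_1\sigma_2\cdots\sigma_{n-1}$ (apply $\sigma_{n-1}$ first). Then for every $T\in\mathcal T_n$, $\delta_nT=T^+$, where $T^+$ is the tree obtained from $T$ by increasing every label by $1$ modulo $n$ (so label $n$ becomes $1$). In particular $\delta_n\sigma_iT=\sigma_{i+1}\delta_nT$ for all $T$ and all $1\le i\le n-2$.
   Context: Write $v_i$ for the vertex labeled $i$ of $T\in\mathcal T_n$. Definition of $\sigma_iT$ for $1\le i\le n-1$: if $v_{i+1}$ is the root of $T$, then $\sigma_iT$ is $T$ with labels $i$ and $i+1$ interchanged. Otherwise form $T_+$ by adding a new vertex $v_0$ as parent of the root, and write $a\to b$ if $a$ is the parent of $b$ in $T_+$; then: (0) if neither of $v_i,v_{i+1}$ is the parent of the other and they do not have the same parent, $\sigma_iT$ is $T$ with labels $i,i+1$ interchanged; (1) if $v_k\to v_i\to v_{i+1}$, then $\sigma_iT$ has $v_k\to v_{i+1}\to v_i$, and all other parent-child relations (in particular the other children of $v_i$ and of $v_{i+1}$) are unchanged; (2) if $v_k\to v_{i+1}\to v_i$, then in $\sigma_iT$ both $v_i$ and $v_{i+1}$ are children of $v_k$, the sets of other children of $v_i$ and of $v_{i+1}$ are interchanged, and all other relations are unchanged; (3) if $v_i,v_{i+1}$ have the same parent $v_k$, then first the sets of children of $v_i$ and $v_{i+1}$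 are interchanged and then $v_{i+1}$ is made a child of $v_i$, so $v_k\to v_i\to v_{i+1}$. In cases (1)-(3), deleting $v_0$ gives $\sigma_iT\in\mathcal T_n$ whose root is the child of $v_0$. *)

theory Defs
  imports Main
begin

text \<open>A rooted tree on vertex labels 1..n is encoded by its parent function in T_+:
  p v is the label of the parent of vertex v, where 0 denotes the extra vertex v_0
  (the parent of the root).\<close>

definition rtree :: "nat \<Rightarrow> (nat \<Rightarrow> nat) \<Rightarrow> bool" where
  "rtree n p \<longleftrightarrow>
     (\<forall>v. v \<notin> {1..n} \<longrightarrow> p v = 0) \<and>
     (\<forall>v\<in>{1..n}. p v \<le> n) \<and>
     card {v\<in>{1..n}. p v = 0} = 1 \<and>
     (\<forall>v\<in>{1..n}. \<exists>k. (p ^^ k) v = 0)"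

definition trees :: "nat \<Rightarrow> (nat \<Rightarrow> nat) set" where
  "trees n = {p. rtree n p}"

definition swl :: "nat \<Rightarrow> nat \<Rightarrow> nat \<Rightarrow> nat" where
  "swl a b x = (if x = a then b else if x = b then a else x)"

definition relabel_swap :: "nat \<Rightarrow> (nat \<Rightarrow> nat) \<Rightarrow> (nat \<Rightarrow> nat)" where
  "relabel_swap i p = (\<lambda>v. swl i (i+1) (p (swl i (i+1) v)))"

definition sigma :: "nat \<Rightarrow> (nat \<Rightarrow> nat) \<Rightarrow> (nat \<Rightarrow> nat)" where
  "sigma i p =
    (if p (i+1) = 0 then relabel_swap i p
     else if p (i+1) = i then
       \<comment> \<open>case (1): v_k -> v_i -> v_(i+1)\<close>
       (\<lambda>v. if v = i then i+1 else if v = i+1 then p i else p v)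
     else if p i = i+1 then
       \<comment> \<open>case (2): v_k -> v_(i+1) -> v_i\<close>
       (\<lambda>v. if v = i then p (i+1) else if v = i+1 then p (i+1)
            else swl i (i+1) (p v))
     else if p i = p (i+1) then
       \<comment> \<open>case (3): common parent v_k\<close>
       (\<lambda>v. if v = i then p i else if v = i+1 then i
            else swl i (i+1) (p v))
     else relabel_swap i p)"

definition delta :: "nat \<Rightarrow> (nat \<Rightarrow> nat) \<Rightarrow> (nat \<Rightarrow> nat)" where
  "delta n = foldr (\<lambda>i f. sigma i \<circ> f) [1..<n] id"

definition shift_lab :: "nat \<Rightarrow> nat \<Rightarrow> nat" where
  "shift_lab n v = (if v = 0 then 0 else v mod n + 1)"

definition tplus :: "nat \<Rightarrow> (nat \<Rightarrow> nat) \<Rightarrow> (nat \<Rightarrow> nat)" where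
  "tplus n p = (\<lambda>w. if w \<in> {1..n}
                     then shift_lab n (p (if w = 1 then n else w - 1))
                     else 0)"

end

theory Submission
  imports Defs
begin

(* A tree is handled through its parent function, and only two properties of it are used:
   all labels lie in 0..n, and there are no cycles of length at most 2. These survive sigma_i
   as soon as cycles of length 3 are excluded too, which avoids proving that sigma_i T is
   again a tree.

   sigma_i is the label transposition (i i+1) applied after a change of shape that refers to
   v_i and v_(i+1) only through parent relations, so it is equivariant under relabellings
   fixing 0. Conjugating sigma_j ... sigma_(n-1) T by the label cycle (j j+1 ... n), every
   factor sigma_i turns into this change of shape for the vertices i and n: vertex n keeps
   its label while it moves down, and each vertex it passes may be exchanged between being
   its sibling and its child. At j = 1 all these exchanges have been undone, so delta_n T
   is T relabelled by the cycle (1 2 ... n), which is T^+. Since that cycle maps i, i+1 to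
   i+1, i+2, equivariance turns sigma_i into sigma_(i+1), giving the commutation rule. *)

definition parent_fun :: "nat \<Rightarrow> (nat \<Rightarrow> nat) \<Rightarrow> bool" where
  "parent_fun n p \<longleftrightarrow> (\<forall>v. v \<notin> {1..n} \<longrightarrow> p v = 0) \<and> (\<forall>v. p v \<le> n)"

definition no_cycles_upto :: "nat \<Rightarrow> (nat \<Rightarrow> nat) \<Rightarrow> bool" where
  "no_cycles_upto m p \<longleftrightarrow> (\<forall>k v. 0 < k \<and> k \<le> m \<and> v \<noteq> 0 \<longrightarrow> (p ^^ k) v \<noteq> v)"

lemma no_cycles_upto_0: "no_cycles_upto 0 p"
  by (auto simp: no_cycles_upto_def)

lemma no_cycles_upto_Suc:
  "no_cycles_upto (Suc m) p \<longleftrightarrow> no_cycles_upto m p \<and> (\<forall>v. v \<noteq> 0 \<longrightarrow> (p ^^ Suc m) v \<noteq> v)"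
  unfolding no_cycles_upto_def le_Suc_eq by blast

lemma no_cycles_upto_2_iff:
  "no_cycles_upto 2 p \<longleftrightarrow> (\<forall>v. v \<noteq> 0 \<longrightarrow> p v \<noteq> v \<and> p (p v) \<noteq> v)"
  by (auto simp: numeral_2_eq_2 no_cycles_upto_Suc no_cycles_upto_0)

lemma no_cycles_upto_3_iff:
  "no_cycles_upto 3 p \<longleftrightarrow> (\<forall>v. v \<noteq> 0 \<longrightarrow> p v \<noteq> v \<and> p (p v) \<noteq> v \<and> p (p (p v)) \<noteq> v)"
  by (auto simp: numeral_3_eq_3 no_cycles_upto_Suc no_cycles_upto_0)

lemma no_cycles_upto_no_fixpoint:
  assumes "no_cycles_upto m p" "0 < m" "v \<noteq> 0"
  shows "p v \<noteq> v"
proof -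
  have "(p ^^ 1) v \<noteq> v"
    using assms(1)[unfolded no_cycles_upto_def, rule_format, of 1 v] assms(2,3) by simp
  then show ?thesis by simp
qed

lemma funpow_fixpoint: "f x = x \<Longrightarrow> (f ^^ m) x = x"
  by (induction m) auto

lemma rtree_parent_fun:
  assumes "rtree n p"
  shows "parent_fun n p"
proof -
  have "p v \<le> n" for v
    using assms by (cases "v \<in> {1..n}") (auto simp: rtree_def)
  then show ?thesis
    using assms by (simp add: rtree_def parent_fun_def)
qed

lemma rtree_no_cycles_upto:
  assumes "rtree n p"
  shows "no_cycles_upto m p"
  unfolding no_cycles_upto_def
proof (intro allI impI)
  fix k v :: nat
  assume "0 < k \<and> k \<le> m \<and> v \<noteq> 0"
  then have "0 < k" "v \<noteq> 0" by auto
  have p0: "p 0 = 0"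
    using assms by (simp add: rtree_def)
  \<comment> \<open>the iterates of v reach the fixpoint 0, which contradicts their periodicity\<close>
  obtain K where K: "(p ^^ K) v = 0"
  proof (cases "v \<in> {1..n}")
    case True
    then show ?thesis using that assms unfolding rtree_def by blast
  next
    case False
    then have "(p ^^ 1) v = 0" using assms by (simp add: rtree_def)
    then show ?thesis by (rule that)
  qed
  have "(p ^^ (K * k)) v = (p ^^ (K * k - K)) ((p ^^ K) v)"
    using \<open>0 < k\<close> by (simp flip: funpow_add comp_apply[of "p ^^ _"])
  also have "\<dots> = 0"
    using K p0 by (simp add: funpow_fixpoint)
  finally show "(p ^^ k) v \<noteq> v"
    using funpow_mod_eq[where f = p and m = "K * k" and n = k and x = v] \<open>v \<noteq> 0\<close>
    by auto
qed

lemma funpow_relabel: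
  assumes "\<And>x. \<pi>' (\<pi> x) = x" "\<And>y. \<pi> (\<pi>' y) = y"
  shows "(\<pi> \<circ> p \<circ> \<pi>') ^^ k = \<pi> \<circ> p ^^ k \<circ> \<pi>'"
  by (induction k) (auto simp: fun_eq_iff assms)

lemma no_cycles_upto_relabel:
  assumes "\<And>x. \<pi>' (\<pi> x) = x" "\<And>y. \<pi> (\<pi>' y) = y" "\<pi> 0 = 0"
    and "no_cycles_upto m p"
  shows "no_cycles_upto m (\<pi> \<circ> p \<circ> \<pi>')"
  unfolding no_cycles_upto_def funpow_relabel[OF assms(1,2)]
proof (intro allI impI)
  fix k v :: nat
  assume k: "0 < k \<and> k \<le> m \<and> v \<noteq> 0"
  then have "\<pi>' v \<noteq> 0"
    using assms(2,3) by metis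
  then have "(p ^^ k) (\<pi>' v) \<noteq> \<pi>' v"
    using k assms(4) by (auto simp: no_cycles_upto_def)
  then show "(\<pi> \<circ> p ^^ k \<circ> \<pi>') v \<noteq> v"
    using assms(1) by (metis comp_apply)
qed

lemma swl_apply_inj:
  assumes "inj f"
  shows "f (swl a b x) = swl (f a) (f b) (f x)"
  using assms by (auto simp: swl_def dest: injD)

lemma relabel_swap_eq_comp: "relabel_swap i p = swl i (i+1) \<circ> p \<circ> swl i (i+1)"
  by (simp add: relabel_swap_def fun_eq_iff)

lemma parent_fun_relabel_swap:
  assumes "parent_fun n p" "1 \<le> i" "i < n"
  shows "parent_fun n (relabel_swap i p)"
  using assms by (auto simp: parent_fun_def relabel_swap_def swl_def)

(* The change of shape made by sigma_i, with a and b in the roles of v_i and v_(i+1),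
   but without exchanging their labels. *)
definition sigma_pair :: "nat \<Rightarrow> nat \<Rightarrow> (nat \<Rightarrow> nat) \<Rightarrow> nat \<Rightarrow> nat" where
  "sigma_pair a b p =
    (if p b = 0 then p
     else if p b = a then (\<lambda>v. if v = b then a else swl a b (p v))
     else if p a = b then p(a := p b)
     else if p a = p b then p(a := b)
     else p)"

lemma sigma_eq_relabel_swap_sigma_pair:
  assumes "p i \<noteq> i" "p (i+1) \<noteq> i+1"
  shows "sigma i p = relabel_swap i (sigma_pair i (i+1) p)"
  using assms by (auto simp: sigma_def sigma_pair_def relabel_swap_def swl_def fun_eq_iff)

lemma sigma_pair_relabel:
  assumes inv: "\<And>x. \<pi>' (\<pi> x) = x" "\<And>y. \<pi> (\<pi>' y) = y" and "\<pi> 0 = 0"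
  shows "sigma_pair (\<pi> a) (\<pi> b) (\<pi> \<circ> p \<circ> \<pi>') = \<pi> \<circ> sigma_pair a b p \<circ> \<pi>'"
proof -
  have "inj \<pi>" by (metis inv(1) injI)
  then have eq: "\<pi> x = \<pi> y \<longleftrightarrow> x = y" for x y by (auto dest: injD)
  have zero: "\<pi> x = 0 \<longleftrightarrow> x = 0" for x using eq[of x 0] \<open>\<pi> 0 = 0\<close> by simp
  have swl: "swl (\<pi> c) (\<pi> d) (\<pi> x) = \<pi> (swl c d x)" for c d x
    by (rule swl_apply_inj[OF \<open>inj \<pi>\<close>, symmetric])
  have at: "v = \<pi> c \<longleftrightarrow> \<pi>' v = c" for v c by (metis inv)
  show ?thesis
    unfolding sigma_pair_def by (auto simp: fun_eq_iff eq zero swl at inv)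
qed

lemma parent_fun_sigma_pair:
  assumes "parent_fun n p" "a \<in> {1..n}" "b \<in> {1..n}"
  shows "parent_fun n (sigma_pair a b p)"
  using assms by (auto simp: parent_fun_def sigma_pair_def swl_def)

lemma no_cycles_upto_2_sigma_pair:
  assumes "p 0 = 0" "no_cycles_upto 3 p" "a \<noteq> b" "a \<noteq> 0" "b \<noteq> 0"
  shows "no_cycles_upto 2 (sigma_pair a b p)"
  using assms unfolding no_cycles_upto_2_iff no_cycles_upto_3_iff sigma_pair_def
  by (auto simp: swl_def)

lemma parent_fun_sigma:
  assumes "parent_fun n p" "p i \<noteq> i" "p (i+1) \<noteq> i+1" "1 \<le> i" "i < n"
  shows "parent_fun n (sigma i p)"
  using assms
  by (simp add: sigma_eq_relabel_swap_sigma_pair parent_fun_relabel_swap parent_fun_sigma_pair)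

lemma no_cycles_upto_2_sigma:
  assumes "parent_fun n p" "no_cycles_upto 3 p" "1 \<le> i"
  shows "no_cycles_upto 2 (sigma i p)"
proof -
  have "p 0 = 0"
    using assms(1) by (simp add: parent_fun_def)
  then have "no_cycles_upto 2 (sigma_pair i (i+1) p)"
    using assms by (intro no_cycles_upto_2_sigma_pair) auto
  then have "no_cycles_upto 2 (swl i (i+1) \<circ> sigma_pair i (i+1) p \<circ> swl i (i+1))"
    using assms(3) by (intro no_cycles_upto_relabel) (auto simp: swl_def)
  moreover have "p i \<noteq> i" "p (i+1) \<noteq> i+1"
    using assms(3) no_cycles_upto_no_fixpoint[OF assms(2)] by auto
  ultimately show ?thesis
    by (simp add: sigma_eq_relabel_swap_sigma_pair relabel_swap_eq_comp)
qed

definition lab_cycle :: "nat \<Rightarrow> nat \<Rightarrow> nat \<Rightarrow> nat" where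
  "lab_cycle n j k = (if k < j \<or> n < k then k else if k = n then j else k + 1)"

definition lab_cycle_inv :: "nat \<Rightarrow> nat \<Rightarrow> nat \<Rightarrow> nat" where
  "lab_cycle_inv n j w = (if w < j \<or> n < w then w else if w = j then n else w - 1)"

definition relabel_cycle :: "nat \<Rightarrow> nat \<Rightarrow> (nat \<Rightarrow> nat) \<Rightarrow> nat \<Rightarrow> nat" where
  "relabel_cycle n j p = lab_cycle n j \<circ> p \<circ> lab_cycle_inv n j"

lemma lab_cycle_inv_cycle [simp]: "j \<le> n \<Longrightarrow> lab_cycle_inv n j (lab_cycle n j k) = k"
  by (auto simp: lab_cycle_def lab_cycle_inv_def)

lemma lab_cycle_cycle_inv [simp]: "j \<le> n \<Longrightarrow> lab_cycle n j (lab_cycle_inv n j w) = w"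
  by (auto simp: lab_cycle_def lab_cycle_inv_def)

lemma lab_cycle_self: "lab_cycle n n = id" "lab_cycle_inv n n = id"
  by (auto simp: lab_cycle_def lab_cycle_inv_def fun_eq_iff)

lemma sigma_relabel_cycle:
  assumes "p a \<noteq> a" "p b \<noteq> b" "1 \<le> j" "j \<le> n"
    and "lab_cycle n j a = i" "lab_cycle n j b = i + 1"
  shows "sigma i (relabel_cycle n j p) = relabel_swap i (relabel_cycle n j (sigma_pair a b p))"
proof -
  let ?\<pi> = "lab_cycle n j" and ?\<pi>' = "lab_cycle_inv n j"
  have inv: "\<And>x. ?\<pi>' (?\<pi> x) = x" "\<And>y. ?\<pi> (?\<pi>' y) = y"
    using assms(4) by simp_all
  have "?\<pi> 0 = 0"
    using assms(3) by (simp add: lab_cycle_def)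
  have "relabel_cycle n j p i \<noteq> i" "relabel_cycle n j p (i+1) \<noteq> i+1"
    using assms inv by (metis comp_apply relabel_cycle_def)+
  then have "sigma i (relabel_cycle n j p)
      = relabel_swap i (sigma_pair i (i+1) (relabel_cycle n j p))"
    by (rule sigma_eq_relabel_swap_sigma_pair)
  also have "sigma_pair i (i+1) (relabel_cycle n j p) = relabel_cycle n j (sigma_pair a b p)"
    using sigma_pair_relabel[OF inv \<open>?\<pi> 0 = 0\<close>, of a b p]
    unfolding assms(5,6) relabel_cycle_def .
  finally show ?thesis .
qed

lemma relabel_swap_relabel_cycle:
  assumes "1 \<le> i" "i < n"
  shows "relabel_swap i (relabel_cycle n (Suc i) p) = relabel_cycle n i p"
proof -
  have "swl i (i+1) (lab_cycle n (Suc i) x) = lab_cycle n i x"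
    "lab_cycle_inv n (Suc i) (swl i (i+1) x) = lab_cycle_inv n i x" for x
    using assms by (auto simp: swl_def lab_cycle_def lab_cycle_inv_def)
  then show ?thesis
    by (simp add: relabel_swap_def relabel_cycle_def fun_eq_iff)
qed

lemma relabel_swap_Suc_relabel_cycle_1:
  assumes "1 \<le> i" "i + 1 < n"
  shows "relabel_swap (i+1) (relabel_cycle n 1 p) = relabel_cycle n 1 (relabel_swap i p)"
proof -
  have "swl (i+1) (i+1+1) (lab_cycle n 1 x) = lab_cycle n 1 (swl i (i+1) x)"
    "lab_cycle_inv n 1 (swl (i+1) (i+1+1) x) = swl i (i+1) (lab_cycle_inv n 1 x)" for x
    using assms by (auto simp: swl_def lab_cycle_def lab_cycle_inv_def)
  then show ?thesis
    by (simp add: relabel_swap_def relabel_cycle_def fun_eq_iff)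
qed

lemma sigma_Suc_relabel_cycle_1:
  assumes "p i \<noteq> i" "p (i+1) \<noteq> i+1" "1 \<le> i" "i + 1 < n"
  shows "sigma (i+1) (relabel_cycle n 1 p) = relabel_cycle n 1 (sigma i p)"
proof -
  have "lab_cycle n 1 i = i + 1" "lab_cycle n 1 (i+1) = i + 1 + 1"
    using assms(3,4) by (auto simp: lab_cycle_def)
  then have "sigma (i+1) (relabel_cycle n 1 p)
      = relabel_swap (i+1) (relabel_cycle n 1 (sigma_pair i (i+1) p))"
    using assms by (intro sigma_relabel_cycle) auto
  also have "\<dots> = relabel_cycle n 1 (relabel_swap i (sigma_pair i (i+1) p))"
    using assms(3,4) by (rule relabel_swap_Suc_relabel_cycle_1)
  also have "relabel_swap i (sigma_pair i (i+1) p) = sigma i p"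
    using assms(1,2) by (simp add: sigma_eq_relabel_swap_sigma_pair)
  finally show ?thesis .
qed

lemma relabel_cycle_1_eq_tplus:
  assumes "parent_fun n p" "1 \<le> n"
  shows "relabel_cycle n 1 p = tplus n p"
proof
  fix w
  have shift: "lab_cycle n 1 k = shift_lab n k" if "k \<le> n" for k
    using that assms(2) by (auto simp: lab_cycle_def shift_lab_def)
  have "p k \<le> n" for k
    using assms(1) by (simp add: parent_fun_def)
  moreover have "lab_cycle_inv n 1 w = (if w = 1 then n else w - 1)" if "w \<in> {1..n}"
    using that by (auto simp: lab_cycle_inv_def)
  moreover have "relabel_cycle n 1 p w = 0" if "w \<notin> {1..n}"
    using that assms
    by (auto simp: relabel_cycle_def lab_cycle_def lab_cycle_inv_def parent_fun_def)
  ultimately show "relabel_cycle n 1 p w = tplus n p w"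
    using shift by (auto simp: relabel_cycle_def tplus_def)
qed

(* sigma_j ... sigma_(n-1) T with the labels j..n rotated back: vertex n keeps its parent,
   and a sibling or child v of n has swapped these two roles iff the position j separates
   the labels of v and of p n. *)
definition slide_tree :: "nat \<Rightarrow> (nat \<Rightarrow> nat) \<Rightarrow> nat \<Rightarrow> nat \<Rightarrow> nat" where
  "slide_tree n p j = (\<lambda>v.
     if p n \<noteq> 0 \<and> v \<noteq> n \<and> (p v = p n \<or> p v = n) \<and> min v (p n) < j \<and> j \<le> max v (p n)
     then swl (p n) n (p v) else p v)"

lemma slide_tree_first:
  assumes "p 0 = 0"
  shows "slide_tree n p 1 = p"
  using assms by (auto simp: slide_tree_def fun_eq_iff min_def)

lemma slide_tree_last:
  assumes "parent_fun n p" "p n \<noteq> n"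
  shows "slide_tree n p n = p"
proof
  fix v
  have "p n < n" "v < n \<or> v = n \<or> p v = 0"
    using assms by (auto simp: parent_fun_def le_less)
  then show "slide_tree n p n v = p v"
    by (auto simp: slide_tree_def)
qed

lemma slide_tree_no_fixpoint:
  assumes "no_cycles_upto 2 p" "v \<noteq> 0"
  shows "slide_tree n p j v \<noteq> v"
  using assms by (auto simp: slide_tree_def swl_def no_cycles_upto_2_iff)

lemma sigma_pair_slide_tree:
  assumes "parent_fun n p" "no_cycles_upto 2 p" "1 \<le> i" "i < n"
  shows "sigma_pair i n (slide_tree n p (Suc i)) = slide_tree n p i"
proof -
  let ?C = "slide_tree n p (Suc i)"
  have pn: "p n \<noteq> n" and pi: "p i \<noteq> i"
    using assms by (auto simp: no_cycles_upto_2_iff)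
  have slide_n: "slide_tree n p j n = p n" for j
    by (simp add: slide_tree_def)
  consider "p n = 0" | "p n = i" | "p n \<noteq> 0" "p n \<noteq> i" by blast
  then show ?thesis
  proof cases
    case 1
    then show ?thesis by (simp add: sigma_pair_def slide_tree_def)
  next
    case 2
    then have "p i \<noteq> n"
      using assms(2,4) by (auto simp: no_cycles_upto_2_iff)
    have sigma_C: "sigma_pair i n ?C = (\<lambda>v. if v = n then i else swl i n (?C v))"
      using 2 assms(3) slide_n by (simp add: sigma_pair_def)
    show ?thesis
    proof
      fix v
      show "sigma_pair i n ?C v = slide_tree n p i v"
        unfolding sigma_C using 2 pi pn \<open>p i \<noteq> n\<close> assms(3,4)
        by (cases "v = i") (auto simp: slide_tree_def swl_def)
    qed
  next
    case 3
    have "sigma_pair i n ?C = ?C(i := sigma_pair i n ?C i)"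
      using 3 slide_n assms(4) by (auto simp: sigma_pair_def)
    moreover have "?C(i := slide_tree n p i i) = slide_tree n p i"
      using 3 by (auto simp: slide_tree_def fun_eq_iff)
    moreover have "sigma_pair i n ?C i = slide_tree n p i i"
      using 3 pi pn slide_n assms(4) by (auto simp: sigma_pair_def slide_tree_def swl_def)
    ultimately show ?thesis by simp
  qed
qed

lemma sigma_relabel_cycle_slide_tree:
  assumes "parent_fun n p" "no_cycles_upto 2 p" "1 \<le> i" "i < n"
  shows "sigma i (relabel_cycle n (Suc i) (slide_tree n p (Suc i)))
    = relabel_cycle n i (slide_tree n p i)"
proof -
  let ?C = "slide_tree n p (Suc i)"
  have "?C i \<noteq> i" "?C n \<noteq> n"
    using assms slide_tree_no_fixpoint by auto
  moreover have "lab_cycle n (Suc i) i = i" "lab_cycle n (Suc i) n = i + 1"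
    using assms(4) by (auto simp: lab_cycle_def)
  ultimately have "sigma i (relabel_cycle n (Suc i) ?C)
      = relabel_swap i (relabel_cycle n (Suc i) (sigma_pair i n ?C))"
    using assms(3,4) by (intro sigma_relabel_cycle) auto
  also have "\<dots> = relabel_cycle n i (sigma_pair i n ?C)"
    using assms(3,4) by (rule relabel_swap_relabel_cycle)
  also have "sigma_pair i n ?C = slide_tree n p i"
    using assms by (rule sigma_pair_slide_tree)
  finally show ?thesis .
qed

lemma foldr_sigma_eq_relabel_cycle:
  assumes "parent_fun n p" "no_cycles_upto 2 p" "1 \<le> j" "j \<le> n"
  shows "foldr (\<lambda>i f. sigma i \<circ> f) [j..<n] id p = relabel_cycle n j (slide_tree n p j)"
  using assms(4,3)
proof (induction j rule: inc_induct)
  case base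
  have "p n \<noteq> n"
    using assms(2,3,4) by (auto simp: no_cycles_upto_2_iff)
  then show ?case
    using assms(1) by (simp add: slide_tree_last lab_cycle_self relabel_cycle_def)
next
  case (step j)
  then have "[j..<n] = j # [Suc j..<n]"
    by (simp add: upt_conv_Cons)
  then show ?case
    using step assms(1,2) by (simp add: sigma_relabel_cycle_slide_tree)
qed

lemma delta_eq_tplus:
  assumes "parent_fun n p" "no_cycles_upto 2 p" "1 \<le> n"
  shows "delta n p = tplus n p"
proof -
  have "p 0 = 0"
    using assms(1) by (simp add: parent_fun_def)
  have "delta n p = relabel_cycle n 1 (slide_tree n p 1)"
    unfolding delta_def using assms by (rule foldr_sigma_eq_relabel_cycle[OF _ _ order.refl])
  also have "\<dots> = tplus n p"
    by (simp only: slide_tree_first[of p, OF \<open>p 0 = 0\<close>]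
        relabel_cycle_1_eq_tplus[OF assms(1,3)])
  finally show ?thesis .
qed

theorem proposition1p3:
  fixes n :: nat
  assumes "n \<ge> 2"
  shows "(\<forall>T\<in>trees n. delta n T = tplus n T) \<and>
         (\<forall>T\<in>trees n. \<forall>i. 1 \<le> i \<and> i \<le> n - 2 \<longrightarrow>
             delta n (sigma i T) = sigma (i+1) (delta n T))"
proof (intro conjI ballI allI impI)
  fix T
  assume "T \<in> trees n"
  then have T: "parent_fun n T" "\<And>m. no_cycles_upto m T"
    by (simp_all add: trees_def rtree_parent_fun rtree_no_cycles_upto)
  have n: "1 \<le> n"
    using assms by simp
  show "delta n T = tplus n T"
    using T n by (rule delta_eq_tplus)
  fix i
  assume i: "1 \<le> i \<and> i \<le> n - 2"
  have T_i: "T i \<noteq> i" "T (i+1) \<noteq> i+1"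
    using i no_cycles_upto_no_fixpoint[OF T(2)[of 1]] by auto
  have "parent_fun n (sigma i T)" "no_cycles_upto 2 (sigma i T)"
    using T T_i i assms by (auto intro: parent_fun_sigma no_cycles_upto_2_sigma)
  then have "delta n (sigma i T) = relabel_cycle n 1 (sigma i T)"
    using delta_eq_tplus relabel_cycle_1_eq_tplus n by metis
  also have "\<dots> = sigma (i+1) (relabel_cycle n 1 T)"
    using T_i i assms by (intro sigma_Suc_relabel_cycle_1[symmetric]) auto
  also have "relabel_cycle n 1 T = delta n T"
    using delta_eq_tplus relabel_cycle_1_eq_tplus T n by metis
  finally show "delta n (sigma i T) = sigma (i+1) (delta n T)" .
qed

end
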